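(* Let $V$ be a nonempty finite set and let $B \subseteq \mathbb{Z}^V$ be a nonempty set satisfying ($\Delta$-EXC): for any $p, q \in B$ and any $u \in \operatorname{supp}(q-p)$, there exists $\alpha \in \Phi_B(p,q)$ with $u \in \operatorname{supp}(\alpha)$. Then $B$ is hole-free, i.e., $B = \operatorname{conv}(B) \cap \mathbb{Z}^V$.
   Context: For $t \in \mathbb{R}^V$, $\operatorname{supp}(t) = \{u \in V : t(u) \neq 0\}$; $\|p\|_1 = \sum_{u \in V}|p(u)|$; $\chi_u$ is the $u$-th unit vector; $\operatorname{conv}$ denotes convex hull. Let $\Phi = \{\pm \chi_u : u \in V\} \cup \{\pm\chi_u \pm \chi_v : u, v \in V, u \ne v\}$. For $p, q \in \mathbb{Z}^V$, $\Phi(p,q) = \{\alpha \in \Phi : \|q - (p+\alpha)\|_1 = \|q-p\|_1 - \|\alpha\|_1\}$, and for $B \subseteq \mathbb{Z}^V$ and $p,q \in B$, $\Phi_B(p,q) = \{\alpha \in \Phi(p,q) : p + \alpha \in B\}$. *)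

theory Defs
  imports "HOL-Analysis.Analysis" "HOL-Library.Function_Algebras"
begin

text \<open>The ground set V is a finite type 'v (automatically nonempty);
  Z^V is 'v \<Rightarrow> int, and R^V is real ^ 'v.\<close>

definition supp :: "('v \<Rightarrow> int) \<Rightarrow> 'v set" where
  "supp t = {u. t u \<noteq> 0}"

definition norm1 :: "('v::finite \<Rightarrow> int) \<Rightarrow> int" where
  "norm1 p = (\<Sum>u\<in>UNIV. \<bar>p u\<bar>)"

definition unitv :: "'v \<Rightarrow> 'v \<Rightarrow> int" where
  "unitv u = (\<lambda>w. if w = u then 1 else 0)"

definition Phi :: "('v \<Rightarrow> int) set" where
  "Phi = {unitv u | u. True} \<union> {- unitv u | u. True}
       \<union> {(\<lambda>w. s * unitv u w + r * unitv v w) | u v s r. u \<noteq> v \<and> s \<in> {1, -1} \<and> r \<in> {1, -1}}"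

definition PhiPQ :: "('v::finite \<Rightarrow> int) \<Rightarrow> ('v \<Rightarrow> int) \<Rightarrow> ('v \<Rightarrow> int) set" where
  "PhiPQ p q = {\<alpha> \<in> Phi. norm1 (q - (p + \<alpha>)) = norm1 (q - p) - norm1 \<alpha>}"

definition PhiB :: "('v::finite \<Rightarrow> int) set \<Rightarrow> ('v \<Rightarrow> int) \<Rightarrow> ('v \<Rightarrow> int) \<Rightarrow> ('v \<Rightarrow> int) set" where
  "PhiB B p q = {\<alpha> \<in> PhiPQ p q. p + \<alpha> \<in> B}"

definition delta_exc :: "('v::finite \<Rightarrow> int) set \<Rightarrow> bool" where
  "delta_exc B \<longleftrightarrow> (\<forall>p\<in>B. \<forall>q\<in>B. \<forall>u\<in>supp (q - p). \<exists>\<alpha>\<in>PhiB B p q. u \<in> supp \<alpha>)"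

definition rvec :: "('v::finite \<Rightarrow> int) \<Rightarrow> real ^ 'v" where
  "rvec p = (\<chi> i. real_of_int (p i))"

definition hole_free :: "('v::finite \<Rightarrow> int) set \<Rightarrow> bool" where
  "hole_free B \<longleftrightarrow> B = {p. rvec p \<in> convex hull (rvec ` B)}"

end

theory Submission
  imports Defs
begin

text \<open>Let \<open>y \<notin> B\<close> be an integer point at \<open>\<ell>\<^sub>1\<close>-distance \<open>d \<ge> 1\<close> from \<open>B\<close>. The exchange
  axiom, applied as single unit steps, forces all points of \<open>B\<close> nearest to \<open>y\<close> to lie on a
  common side of \<open>y\<close> in every coordinate; record these sides as \<open>c \<in> {-1,0,1}\<^sup>V\<close>, so that
  \<open>c\<cdot>(p - y) = d\<close> for every nearest \<open>p\<close>. Induction on the distance of \<open>q \<in> B\<close> to \<open>y\<close>,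
  stepping from \<open>q\<close> towards a suitable nearest point, shows \<open>c\<cdot>(q - y) \<ge> d\<close> on all of \<open>B\<close>.
  Hence the integral hyperplane \<open>c\<cdot>z = c\<cdot>y + 1\<close> separates \<open>y\<close> from the convex hull of \<open>B\<close>.\<close>

definition int_between :: "int \<Rightarrow> int \<Rightarrow> int \<Rightarrow> bool" where
  "int_between a b c \<longleftrightarrow> \<bar>c - a\<bar> = \<bar>c - b\<bar> + \<bar>b - a\<bar>"

lemma abs_unit_step_eq:
  fixes a b r :: int
  assumes "\<bar>r\<bar> \<le> 1"
  shows "\<bar>b + r - a\<bar> = \<bar>b - a\<bar> - \<bar>r\<bar> \<longleftrightarrow> r = 0 \<or> b \<noteq> a \<and> r = sgn (a - b)"
  using assms by (auto simp: sgn_if abs_if)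

lemma int_between_step:
  fixes a b c :: int
  assumes "int_between a b c" "c \<noteq> b"
  shows "\<bar>c + sgn (b - c) - a\<bar> = \<bar>c - a\<bar> - 1"
  using assms unfolding int_between_def by (cases "b < c") (simp_all add: sgn_if; arith)+

lemma int_between_sgn: "int_between a (a + sgn (c - a)) c"
  by (simp add: int_between_def sgn_if)

lemma int_between_strict:
  fixes a b c :: int
  assumes "int_between a b c" "\<bar>b - a\<bar> < \<bar>c - a\<bar>"
  shows "sgn (c - a) * (b - c) < 0"
  using assms unfolding int_between_def
  by (cases "a < c"; cases "b < c"; simp add: sgn_if; arith)

lemma not_int_between:
  fixes a b c :: int
  assumes "\<not> int_between a b c"
  shows "(b - a) * (c - b) < 0"
  using assms unfolding int_between_def
  by (cases "b < a"; cases "c < b"; simp add: mult_less_0_iff; arith)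

lemma sum_int_between_eq:
  fixes a b c :: "'v \<Rightarrow> int"
  assumes "finite S" "\<And>w. w \<in> S \<Longrightarrow> int_between (a w) (b w) (c w)"
    and "(\<Sum>w\<in>S. \<bar>c w - a w\<bar>) \<le> (\<Sum>w\<in>S. \<bar>b w - a w\<bar>)"
    and "w \<in> S"
  shows "b w = c w"
proof -
  have "(\<Sum>w\<in>S. \<bar>c w - b w\<bar>) = (\<Sum>w\<in>S. \<bar>c w - a w\<bar>) - (\<Sum>w\<in>S. \<bar>b w - a w\<bar>)"
    using assms(2) by (simp add: int_between_def sum.distrib)
  also have "\<dots> \<le> 0" using assms(3) by simp
  finally have "(\<Sum>w\<in>S. \<bar>c w - b w\<bar>) = 0" by (simp add: sum_nonneg antisym)
  then show ?thesis using assms(1,4) by (simp add: sum_nonneg_eq_0_iff)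
qed

definition shift :: "('v \<Rightarrow> int) \<Rightarrow> 'v \<Rightarrow> int \<Rightarrow> 'v \<Rightarrow> int \<Rightarrow> 'v \<Rightarrow> int" where
  "shift p u s v r = (\<lambda>w. p w + (if w = u then s else if w = v then r else 0))"

lemma sum_shift:
  fixes f :: "'v::finite \<Rightarrow> int \<Rightarrow> int"
  assumes "r \<noteq> 0 \<Longrightarrow> u \<noteq> v"
  shows "(\<Sum>w\<in>UNIV. f w (shift p u s v r w)) = (\<Sum>w\<in>UNIV. f w (p w))
     + (f u (p u + s) - f u (p u)) + (f v (p v + r) - f v (p v))"
proof -
  let ?g = "\<lambda>w. f w (shift p u s v r w) - f w (p w)"
  have "(\<Sum>w\<in>UNIV. f w (shift p u s v r w)) - (\<Sum>w\<in>UNIV. f w (p w)) = (\<Sum>w\<in>UNIV. ?g w)"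
    by (simp add: sum_subtractf)
  also have "\<dots> = (\<Sum>w\<in>{u,v}. ?g w)"
    by (rule sum.mono_neutral_right) (auto simp: shift_def)
  also have "\<dots> = (f u (p u + s) - f u (p u)) + (f v (p v + r) - f v (p v))"
    using assms by (cases "r = 0"; cases "u = v") (auto simp: shift_def)
  finally show ?thesis by simp
qed

definition dist1 :: "('v::finite \<Rightarrow> int) \<Rightarrow> ('v \<Rightarrow> int) \<Rightarrow> int" where
  "dist1 p q = (\<Sum>w\<in>UNIV. \<bar>p w - q w\<bar>)"

lemma dist1_nonneg: "0 \<le> dist1 p q"
  by (simp add: dist1_def sum_nonneg)

lemma dist1_eq_0_iff: "dist1 p q = 0 \<longleftrightarrow> p = q"
  by (auto simp: dist1_def sum_nonneg_eq_0_iff fun_eq_iff)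

lemma dist1_split: "dist1 p q = \<bar>p u - q u\<bar> + (\<Sum>w\<in>UNIV - {u}. \<bar>p w - q w\<bar>)"
  unfolding dist1_def by (simp add: sum.remove)

lemma dist1_shift:
  assumes "r \<noteq> 0 \<Longrightarrow> u \<noteq> v"
  shows "dist1 (shift p u s v r) q = dist1 p q
     + (\<bar>p u + s - q u\<bar> - \<bar>p u - q u\<bar>) + (\<bar>p v + r - q v\<bar> - \<bar>p v - q v\<bar>)"
  unfolding dist1_def using sum_shift[where f = "\<lambda>w t. \<bar>t - q w\<bar>", OF assms] by simp

lemma ex_dist1_minimizer:
  assumes "P p0"
  obtains p where "P p" "\<And>p'. P p' \<Longrightarrow> dist1 p q \<le> dist1 p' q"
proof -
  obtain p where "P p" and m: "\<And>p'. P p' \<Longrightarrow> nat (dist1 p q) \<le> nat (dist1 p' q)"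
    using ex_has_least_nat[of P p0 "\<lambda>z. nat (dist1 z q)"] assms by blast
  then show ?thesis using that dist1_nonneg by (metis nat_le_eq_zle)
qed

subsection \<open>The exchange axiom as unit steps\<close>

lemma Phi_elem_shift:
  assumes "\<alpha> \<in> Phi" "\<alpha> u \<noteq> 0"
  obtains s v r where "\<bar>s\<bar> = 1" "\<bar>r\<bar> \<le> 1" "r \<noteq> 0 \<Longrightarrow> u \<noteq> v" "\<alpha> = shift (\<lambda>_. 0) u s v r"
  using assms unfolding Phi_def
proof (elim UnE CollectE exE conjE)
  fix u' assume "\<alpha> = unitv u'" "\<alpha> u \<noteq> 0"
  then show thesis
    using that[of 1 0 u] by (auto simp: unitv_def shift_def fun_eq_iff split: if_splits)
next
  fix u' assume "\<alpha> = - unitv u'" "\<alpha> u \<noteq> 0"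
  then show thesis
    using that[of "-1" 0 u] by (auto simp: unitv_def shift_def fun_eq_iff split: if_splits)
next
  fix u1 v1 s r assume a: "\<alpha> = (\<lambda>w. s * unitv u1 w + r * unitv v1 w)" "u1 \<noteq> v1"
    "s \<in> {1, -1}" "r \<in> {1, -1}" "\<alpha> u \<noteq> 0"
  then consider "u = u1" | "u = v1" by (auto simp: unitv_def split: if_splits)
  then show thesis
  proof cases
    case 1
    then show thesis using a that[of s r v1] by (auto simp: unitv_def shift_def fun_eq_iff)
  next
    case 2
    then show thesis using a that[of r s u1] by (auto simp: unitv_def shift_def fun_eq_iff)
  qed
qed

text \<open>The distance to \<open>q\<close> drops by the full \<open>\<ell>\<^sub>1\<close>-norm of \<open>\<alpha>\<close>, so every
  coordinate of \<open>\<alpha>\<close> points from \<open>p\<close> towards \<open>q\<close>.\<close>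

lemma delta_exc_unit_step:
  assumes "delta_exc B" "p \<in> B" "q \<in> B" "p u \<noteq> q u"
  obtains v r where "r = 0 \<or> v \<noteq> u \<and> p v \<noteq> q v \<and> r = sgn (q v - p v)"
    and "shift p u (sgn (q u - p u)) v r \<in> B"
proof -
  have "u \<in> supp (q - p)" using assms(4) by (simp add: supp_def)
  then obtain \<alpha> where "\<alpha> \<in> PhiB B p q" "\<alpha> u \<noteq> 0"
    using assms unfolding delta_exc_def supp_def by blast
  then have \<alpha>: "\<alpha> \<in> Phi" "norm1 (q - (p + \<alpha>)) = norm1 (q - p) - norm1 \<alpha>" "p + \<alpha> \<in> B"
    and "\<alpha> u \<noteq> 0"
    by (auto simp: PhiB_def PhiPQ_def)
  then obtain s v r where sr: "\<bar>s\<bar> = 1" "\<bar>r\<bar> \<le> 1" "r \<noteq> 0 \<Longrightarrow> u \<noteq> v"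
    and \<alpha>_eq: "\<alpha> = shift (\<lambda>_. 0) u s v r"
    using Phi_elem_shift[OF \<alpha>(1) \<open>\<alpha> u \<noteq> 0\<close>] by metis
  have p\<alpha>: "p + \<alpha> = shift p u s v r" by (simp add: \<alpha>_eq shift_def fun_eq_iff)
  have "norm1 (q - (p + \<alpha>)) = dist1 (shift p u s v r) q"
    by (simp add: norm1_def dist1_def p\<alpha> abs_minus_commute)
  moreover have "norm1 (q - p) = dist1 p q"
    by (simp add: norm1_def dist1_def abs_minus_commute)
  moreover have "norm1 \<alpha> = \<bar>s\<bar> + \<bar>r\<bar>"
    using dist1_shift[OF sr(3), where p = "\<lambda>_. 0" and q = "\<lambda>_. 0"]
    by (simp add: norm1_def dist1_def \<alpha>_eq)
  ultimately have "(\<bar>p u + s - q u\<bar> - \<bar>p u - q u\<bar>) + (\<bar>p v + r - q v\<bar> - \<bar>p v - q v\<bar>)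
      = - \<bar>s\<bar> - \<bar>r\<bar>"
    using \<alpha>(2) dist1_shift[OF sr(3), where p = p and q = q] by simp
  then have "\<bar>p u + s - q u\<bar> = \<bar>p u - q u\<bar> - \<bar>s\<bar>" "\<bar>p v + r - q v\<bar> = \<bar>p v - q v\<bar> - \<bar>r\<bar>"
    by (smt (verit, ccfv_SIG) abs_triangle_ineq4)+
  then have "s = sgn (q u - p u)" "r = 0 \<or> p v \<noteq> q v \<and> r = sgn (q v - p v)"
    using sr(1,2) abs_unit_step_eq[of s "p u" "q u"] abs_unit_step_eq[of r "p v" "q v"] by auto
  then show thesis using that[of r v] sr(3) \<alpha>(3) p\<alpha> by (auto simp: sgn_0_0)
qed

subsection \<open>Points of \<open>B\<close> nearest to a given point\<close>

locale nearest_points =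
  fixes B :: "('v::finite \<Rightarrow> int) set" and x :: "'v \<Rightarrow> int" and d :: int
  assumes exc: "delta_exc B"
    and d_le: "\<And>q. q \<in> B \<Longrightarrow> d \<le> dist1 q x"
    and d_attained: "\<exists>p\<in>B. dist1 p x = d"
begin

definition nearest :: "('v \<Rightarrow> int) set" where
  "nearest = {p \<in> B. dist1 p x = d}"

lemma nearestD: "p \<in> nearest \<Longrightarrow> p \<in> B" "p \<in> nearest \<Longrightarrow> dist1 p x = d"
  by (simp_all add: nearest_def)

lemma nearest_step_toward:
  assumes "p \<in> nearest" "q \<in> B" "(p w - x w) * (q w - p w) < 0"
  obtains v r where "v \<noteq> w" "p v \<noteq> q v" "r = sgn (q v - p v)" "0 \<le> (p v - x v) * r"
    "shift p w (sgn (q w - p w)) v r \<in> nearest"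
    "dist1 (shift p w (sgn (q w - p w)) v r) q < dist1 p q"
proof -
  let ?s = "sgn (q w - p w)"
  have "p w \<noteq> q w" using assms(3) by auto
  then obtain v r where vr: "r = 0 \<or> v \<noteq> w \<and> p v \<noteq> q v \<and> r = sgn (q v - p v)"
    and inB: "shift p w ?s v r \<in> B"
    using delta_exc_unit_step[OF exc nearestD(1)[OF assms(1)] assms(2)] by metis
  have hr: "r \<noteq> 0 \<Longrightarrow> w \<noteq> v" using vr by auto
  have "\<bar>p w + ?s - x w\<bar> = \<bar>p w - x w\<bar> - 1"
    using assms(3) by (auto simp: sgn_if mult_less_0_iff)
  then have "dist1 (shift p w ?s v r) x = d - 1 + (\<bar>p v + r - x v\<bar> - \<bar>p v - x v\<bar>)"
    using dist1_shift[OF hr, where p = p and s = ?s and q = x] nearestD(2)[OF assms(1)] by simp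
  moreover have "d \<le> dist1 (shift p w ?s v r) x" using d_le[OF inB] .
  ultimately have away: "1 \<le> \<bar>p v + r - x v\<bar> - \<bar>p v - x v\<bar>"
    and "dist1 (shift p w ?s v r) x = d"
    using vr by (auto simp: sgn_if)
  then have "shift p w ?s v r \<in> nearest" using inB by (simp add: nearest_def)
  moreover have r: "v \<noteq> w" "p v \<noteq> q v" "r = sgn (q v - p v)" "0 \<le> (p v - x v) * r"
    using vr away by (auto simp: sgn_if zero_le_mult_iff split: if_splits)
  moreover have "dist1 (shift p w ?s v r) q = dist1 p q - 2"
    using dist1_shift[OF hr, where p = p and s = ?s and q = q] r(2,3) \<open>p w \<noteq> q w\<close>
      abs_unit_step_eq[of ?s "p w" "q w"] abs_unit_step_eq[of r "p v" "q v"]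
    by (simp add: abs_sgn_eq)
  ultimately show thesis using that by simp
qed

lemma nearest_between:
  assumes "p \<in> nearest" "q \<in> B"
    and opposite: "\<And>u. u \<in> U \<Longrightarrow> (p u - x u) * (q u - x u) < 0"
    and minimal: "\<And>p'. p' \<in> nearest \<Longrightarrow> (\<And>u. u \<in> U \<Longrightarrow> p' u = p u) \<Longrightarrow> dist1 p q \<le> dist1 p' q"
    and "w \<notin> U"
  shows "int_between (x w) (p w) (q w)"
proof (rule ccontr)
  assume "\<not> ?thesis"
  then have "(p w - x w) * (q w - p w) < 0" by (rule not_int_between)
  then obtain v r where vr: "v \<noteq> w" "p v \<noteq> q v" "r = sgn (q v - p v)" "0 \<le> (p v - x v) * r"
    and p': "shift p w (sgn (q w - p w)) v r \<in> nearest"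
      "dist1 (shift p w (sgn (q w - p w)) v r) q < dist1 p q"
    using nearest_step_toward[OF assms(1,2)] by metis
  have "v \<notin> U"
  proof
    assume "v \<in> U"
    then show False using opposite[of v] vr(2-4)
      by (auto simp: sgn_if zero_le_mult_iff mult_less_0_iff split: if_splits)
  qed
  then have "shift p w (sgn (q w - p w)) v r u = p u" if "u \<in> U" for u
    using \<open>w \<notin> U\<close> that by (auto simp: shift_def)
  then have "dist1 p q \<le> dist1 (shift p w (sgn (q w - p w)) v r) q"
    using minimal[OF p'(1)] by blast
  then show False using p'(2) by simp
qed

lemma nearest_on_side:
  assumes e: "\<bar>e\<bar> = 1" and "q \<in> B" "e * (q u - x u) < 0"
    and "p \<in> nearest" "0 < e * (p u - x u)"
    and minimal: "\<And>p'. p' \<in> nearest \<Longrightarrow> 0 < e * (p' u - x u) \<Longrightarrow> dist1 p q \<le> dist1 p' q"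
  shows "p u - x u = e" and "\<And>w. w \<noteq> u \<Longrightarrow> int_between (x w) (p w) (q w)"
proof -
  from e have e: "e = 1 \<or> e = -1" by auto
  have opposite: "(p u - x u) * (q u - x u) < 0"
    using assms(3,5) e by (auto simp: abs_if mult_less_0_iff zero_less_mult_iff split: if_splits)
  show "p u - x u = e"
  proof (rule ccontr)
    assume "p u - x u \<noteq> e"
    then have far: "2 \<le> e * (p u - x u)" using assms(5) e by (auto simp: abs_if)
    have "(p u - x u) * (q u - p u) < 0"
      using opposite far e by (auto simp: abs_if mult_less_0_iff zero_less_mult_iff)
    then obtain v r where "v \<noteq> u"
      and p': "shift p u (sgn (q u - p u)) v r \<in> nearest"
        "dist1 (shift p u (sgn (q u - p u)) v r) q < dist1 p q"
      using nearest_step_toward[OF assms(4,2)] by metis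
    have "sgn (q u - p u) = - e"
      using assms(3) far e by (auto simp: abs_if sgn_if zero_less_mult_iff mult_less_0_iff)
    then have "0 < e * (shift p u (sgn (q u - p u)) v r u - x u)"
      using far e by (auto simp: shift_def algebra_simps abs_if)
    then show False using minimal[OF p'(1)] p'(2) by simp
  qed
  show "int_between (x w) (p w) (q w)" if "w \<noteq> u" for w
    using nearest_between[OF assms(4,2), of "{u}"] opposite assms(5) minimal that by auto
qed

lemma nearest_same_side:
  assumes "p \<in> nearest" "p' \<in> nearest" "p w < x w"
  shows "p' w \<le> x w"
proof (rule ccontr)
  assume "\<not> p' w \<le> x w"
  then obtain p'' where p'': "p'' \<in> nearest \<and> 0 < 1 * (p'' w - x w)"
    and minimal: "\<And>z. z \<in> nearest \<and> 0 < 1 * (z w - x w) \<Longrightarrow> dist1 p'' p \<le> dist1 z p"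
    using ex_dist1_minimizer[of "\<lambda>z. z \<in> nearest \<and> 0 < 1 * (z w - x w)" p'] assms(2) by auto
  have pB: "p \<in> B" using nearestD(1)[OF assms(1)] .
  have unit: "p'' w - x w = 1" and between: "\<And>z. z \<noteq> w \<Longrightarrow> int_between (x z) (p'' z) (p z)"
    using nearest_on_side[of 1 p w p''] pB assms(3) p'' minimal by auto
  have "(\<Sum>z\<in>UNIV - {w}. \<bar>p z - x z\<bar>) \<le> (\<Sum>z\<in>UNIV - {w}. \<bar>p'' z - x z\<bar>)"
    using dist1_split[of p x w] dist1_split[of p'' x w] unit assms(3)
      nearestD(2)[OF assms(1)] nearestD(2)[of p''] p'' by simp
  then have agree: "p'' z = p z" if "z \<noteq> w" for z
    using sum_int_between_eq[of "UNIV - {w}" x p'' p] between that by auto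
  have "p w \<noteq> p'' w" using assms(3) unit by simp
  then obtain v r where vr: "r = 0 \<or> v \<noteq> w \<and> p v \<noteq> p'' v \<and> r = sgn (p'' v - p v)"
    and inB: "shift p w (sgn (p'' w - p w)) v r \<in> B"
    using delta_exc_unit_step[OF exc pB nearestD(1)[of p'']] p'' by metis
  have "r = 0" using vr agree by auto
  moreover have "sgn (p'' w - p w) = 1" using assms(3) unit by simp
  ultimately have "dist1 (shift p w (sgn (p'' w - p w)) v r) x = d - 1"
    using dist1_shift[where p = p and q = x and u = w and v = v and r = r]
      nearestD(2)[OF assms(1)] assms(3) by simp
  then show False using d_le[OF inB] by simp
qed

text \<open>By \<open>nearest_same_side\<close> the first two cases exclude each other.\<close>

definition side :: "'v \<Rightarrow> int" where
  "side w = (if \<exists>p\<in>nearest. x w < p w then 1 else if \<exists>p\<in>nearest. p w < x w then -1 else 0)"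

lemma side_cases: "side w = 1 \<or> side w = 0 \<or> side w = -1"
  by (simp add: side_def)

lemma side_nearest: "p \<in> nearest \<Longrightarrow> side w * (p w - x w) = \<bar>p w - x w\<bar>"
  using nearest_same_side[of p _ w] by (force simp: side_def)

lemma side_witness: "side w \<noteq> 0 \<Longrightarrow> \<exists>p\<in>nearest. 0 < side w * (p w - x w)"
  by (auto simp: side_def split: if_splits)

definition signed_dist :: "('v \<Rightarrow> int) \<Rightarrow> int" where
  "signed_dist q = (\<Sum>w\<in>UNIV. side w * (q w - x w))"

lemma signed_dist_nearest: "p \<in> nearest \<Longrightarrow> signed_dist p = d"
  using side_nearest nearestD(2) by (simp add: signed_dist_def dist1_def)

lemma signed_dist_shift:
  assumes "r \<noteq> 0 \<Longrightarrow> u \<noteq> v"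
  shows "signed_dist (shift q u s v r) = signed_dist q + side u * s + side v * r"
  unfolding signed_dist_def
  using sum_shift[where f = "\<lambda>w t. side w * (t - x w)", OF assms] by (simp add: algebra_simps)

lemma signed_dist_bound_by_step:
  assumes "q \<in> B" "p \<in> B"
    and approach: "\<And>w. q w \<noteq> p w \<Longrightarrow> \<bar>q w + sgn (p w - q w) - x w\<bar> < \<bar>q w - x w\<bar>"
    and "q w \<noteq> p w" "side w * (p w - q w) < 0"
    and IH: "\<And>q'. q' \<in> B \<Longrightarrow> dist1 q' x < dist1 q x \<Longrightarrow> d \<le> signed_dist q'"
  shows "d \<le> signed_dist q"
proof -
  let ?s = "sgn (p w - q w)"
  obtain v r where vr: "r = 0 \<or> v \<noteq> w \<and> q v \<noteq> p v \<and> r = sgn (p v - q v)"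
    and inB: "shift q w ?s v r \<in> B"
    using delta_exc_unit_step[OF exc assms(1,2) assms(4)] by metis
  have hr: "r \<noteq> 0 \<Longrightarrow> w \<noteq> v" using vr by auto
  have "\<bar>q v + r - x v\<bar> \<le> \<bar>q v - x v\<bar>" using vr approach[of v] by auto
  then have "dist1 (shift q w ?s v r) x < dist1 q x"
    using dist1_shift[OF hr, where p = q and s = ?s and q = x] approach[OF assms(4)] by simp
  then have "d \<le> signed_dist (shift q w ?s v r)" using IH inB by blast
  also have "\<dots> = signed_dist q + side w * ?s + side v * r"
    by (rule signed_dist_shift[OF hr])
  also have "side w * ?s = -1"
    using assms(5) side_cases[of w] by (auto simp: sgn_if)
  also have "side v * r \<le> 1"
    using side_cases[of v] vr by (auto simp: sgn_if)
  finally show ?thesis by simp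
qed

text \<open>Counting: \<open>q\<close> exceeds the distance \<open>d\<close> of \<open>p''\<close> by \<open>1 + \<bar>r\<bar>\<close>, while \<open>u\<close> contributes
  nothing to the excess and \<open>v\<close> at most \<open>1\<close>.\<close>

lemma farther_coordinate_exists:
  assumes q: "q = shift p u s v r" "p \<in> nearest" "p u = x u" "\<bar>s\<bar> = 1"
    and r: "r = 0 \<or> v \<noteq> u \<and> p v = x v \<and> \<bar>r\<bar> = 1"
    and p'': "p'' \<in> nearest" "\<bar>p'' u - x u\<bar> = 1"
    and between: "\<And>w. w \<noteq> u \<Longrightarrow> int_between (x w) (p'' w) (q w)"
  obtains z where "z \<noteq> u" "r \<noteq> 0 \<longrightarrow> z \<noteq> v" "\<bar>p'' z - x z\<bar> < \<bar>q z - x z\<bar>"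
proof -
  define E where "E z = \<bar>q z - x z\<bar> - \<bar>p'' z - x z\<bar>" for z
  define T where "T = (if r = 0 then UNIV - {u} else UNIV - {u, v})"
  have hr: "r \<noteq> 0 \<Longrightarrow> u \<noteq> v" using r by auto
  have "dist1 q x = d + 1 + \<bar>r\<bar>"
    using dist1_shift[OF hr, where p = p and s = s and q = x] q r by (auto simp: nearestD(2))
  moreover have "\<bar>q u - x u\<bar> = 1" using q by (simp add: shift_def)
  ultimately have sum_E: "(\<Sum>z\<in>UNIV - {u}. E z) = 1 + \<bar>r\<bar>"
    using dist1_split[of q x u] dist1_split[of p'' x u] p'' nearestD(2)[of p'']
    by (simp add: E_def sum_subtractf)
  have E_v: "E v \<le> 1" if "r \<noteq> 0"
  proof -
    have "q v - x v = r" using q(1) r that by (simp add: shift_def)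
    then show ?thesis using r that by (simp add: E_def)
  qed
  have "0 < (\<Sum>z\<in>T. E z)"
  proof (cases "r = 0")
    case False
    then have "T = UNIV - {u} - {v}" by (auto simp: T_def)
    then have "(\<Sum>z\<in>UNIV - {u}. E z) = E v + (\<Sum>z\<in>T. E z)"
      using hr False by (simp add: sum.remove[of "UNIV - {u}" v])
    then show ?thesis using False sum_E E_v by simp
  qed (simp add: T_def sum_E)
  then obtain z where "z \<in> T" "0 < E z"
    by (metis not_less sum_nonpos)
  then show thesis using that by (auto simp: T_def E_def split: if_splits)
qed

text \<open>Here the step of \<open>q\<close> at \<open>u\<close> goes against the sign pattern; a nearest point \<open>p''\<close> on
  the other side of \<open>x\<close> at \<open>u\<close> provides the descending step.\<close>

lemma signed_dist_bound_unit_shift: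
  assumes q: "q = shift p u s v r" "q \<in> B"
    and p: "p \<in> nearest" "p u = x u"
    and s: "\<bar>s\<bar> = 1" "side u * s = -1"
    and r: "r = 0 \<or> v \<noteq> u \<and> p v = x v \<and> \<bar>r\<bar> = 1"
    and IH: "\<And>q'. q' \<in> B \<Longrightarrow> dist1 q' x < dist1 q x \<Longrightarrow> d \<le> signed_dist q'"
  shows "d \<le> signed_dist q"
proof -
  define e where "e = side u"
  have e: "e = 1 \<or> e = -1" "s = - e" using s side_cases[of u] by (auto simp: e_def abs_if)
  have q_u: "q u - x u = - e" using q(1) p(2) e(2) by (simp add: shift_def)
  obtain p0 where "p0 \<in> nearest \<and> 0 < e * (p0 u - x u)"
    using side_witness[of u] e(1) by (force simp: e_def)
  then obtain p'' where p'': "p'' \<in> nearest \<and> 0 < e * (p'' u - x u)"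
    and minimal: "\<And>z. z \<in> nearest \<and> 0 < e * (z u - x u) \<Longrightarrow> dist1 p'' q \<le> dist1 z q"
    using ex_dist1_minimizer[of "\<lambda>z. z \<in> nearest \<and> 0 < e * (z u - x u)" p0 q] by blast
  have "\<bar>e\<bar> = 1" "e * (q u - x u) < 0" using e q_u by auto
  then have p''_u: "p'' u - x u = e"
    and between: "\<And>w. w \<noteq> u \<Longrightarrow> int_between (x w) (p'' w) (q w)"
    using nearest_on_side[OF _ q(2), of e u p''] p'' minimal by auto
  have "\<bar>p'' u - x u\<bar> = 1" using p''_u e(1) by auto
  then obtain z where z: "z \<noteq> u" "r \<noteq> 0 \<longrightarrow> z \<noteq> v" "\<bar>p'' z - x z\<bar> < \<bar>q z - x z\<bar>"
    using farther_coordinate_exists[OF q(1) p s(1) r conjunct1[OF p''] _ between] by blast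
  have "q z = p z" using q(1) z(1,2) by (auto simp: shift_def)
  then have "side z * (q z - x z) = \<bar>q z - x z\<bar>" "q z \<noteq> x z"
    using side_nearest[OF p(1)] z(3) by auto
  then have "side z = sgn (q z - x z)"
    using side_cases[of z] by (auto simp: sgn_if split: if_splits)
  then have "side z * (p'' z - q z) < 0"
    using int_between_strict[OF between[OF z(1)] z(3)] by simp
  moreover have "\<bar>q w + sgn (p'' w - q w) - x w\<bar> < \<bar>q w - x w\<bar>" if "q w \<noteq> p'' w" for w
  proof (cases "w = u")
    case True
    then show ?thesis using q_u p''_u e(1) by (auto simp: sgn_if)
  next
    case False
    then show ?thesis using int_between_step[OF between[OF False]] that by simp
  qed
  ultimately show ?thesis
    using signed_dist_bound_by_step[OF q(2) nearestD(1)[of p''], of z] z(3) p'' IH by auto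
qed

lemma signed_dist_bound_aligned:
  assumes "q \<in> B" "p \<in> nearest"
    and between: "\<And>w. int_between (x w) (p w) (q w)"
    and aligned: "\<And>w. 0 \<le> side w * (p w - q w)"
    and IH: "\<And>q'. q' \<in> B \<Longrightarrow> dist1 q' x < dist1 q x \<Longrightarrow> d \<le> signed_dist q'"
  shows "d \<le> signed_dist q"
proof (rule ccontr)
  assume "\<not> d \<le> signed_dist q"
  then have less: "signed_dist q < d" by simp
  have agree: "q w = p w" if "p w \<noteq> x w" for w
  proof -
    have "side w = sgn (p w - x w)"
      using side_nearest[OF assms(2), of w] that side_cases[of w] by (auto simp: sgn_if split: if_splits)
    then show ?thesis
      using between[of w] aligned[of w] that unfolding int_between_def
      by (cases "p w < x w"; simp add: sgn_if; arith)
  qed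
  have "(\<Sum>w\<in>UNIV. side w * (q w - p w)) = signed_dist q - signed_dist p"
    by (simp add: signed_dist_def sum_subtractf algebra_simps)
  then have "(\<Sum>w\<in>UNIV. side w * (q w - p w)) < 0"
    using signed_dist_nearest[OF assms(2)] less by simp
  then obtain u where u: "side u * (q u - p u) < 0"
    using sum_nonneg[of UNIV "\<lambda>w. side w * (q w - p w)"] by (meson not_less)
  then have "p u \<noteq> q u" by auto
  then have p_u: "p u = x u" using agree by metis
  let ?s = "sgn (q u - p u)"
  obtain v r where vr: "r = 0 \<or> v \<noteq> u \<and> p v \<noteq> q v \<and> r = sgn (q v - p v)"
    and inB: "shift p u ?s v r \<in> B"
    using delta_exc_unit_step[OF exc nearestD(1)[OF assms(2)] assms(1) \<open>p u \<noteq> q u\<close>] by metis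
  let ?q' = "shift p u ?s v r"
  have hr: "r \<noteq> 0 \<Longrightarrow> u \<noteq> v" using vr by auto
  have s: "\<bar>?s\<bar> = 1" "side u * ?s = -1"
    using u \<open>p u \<noteq> q u\<close> side_cases[of u] by (auto simp: sgn_if)
  have "p v = x v" if "r \<noteq> 0" using vr agree that by metis
  then have r: "r = 0 \<or> v \<noteq> u \<and> p v = x v \<and> \<bar>r\<bar> = 1"
    using vr by (auto simp: sgn_if)
  have "side v * r \<le> 0"
    using vr aligned[of v] side_cases[of v] by (auto simp: sgn_if)
  then have "signed_dist ?q' < d"
    using signed_dist_shift[OF hr, where q = p and s = ?s] signed_dist_nearest[OF assms(2)] s by simp
  then have "dist1 q x \<le> dist1 ?q' x" using IH[OF inB] by linarith
  moreover have "int_between (x w) (?q' w) (q w)" for w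
    using between[of w] p_u r vr int_between_sgn[of "x w" "q w"]
    by (auto simp: shift_def)
  ultimately have "?q' w = q w" for w
    using sum_int_between_eq[of UNIV x ?q' q w] by (simp add: dist1_def)
  then have "q = ?q'" by auto
  then have "d \<le> signed_dist q"
    by (rule signed_dist_bound_unit_shift[OF _ assms(1,2) p_u s r IH])
  with less show False by simp
qed

lemma signed_dist_lower_bound: "q \<in> B \<Longrightarrow> d \<le> signed_dist q"
proof (induction "nat (dist1 q x)" arbitrary: q rule: less_induct)
  case less
  have IH: "d \<le> signed_dist q'" if "q' \<in> B" "dist1 q' x < dist1 q x" for q'
    using less.hyps that dist1_nonneg[of q' x] by simp
  obtain p0 where "p0 \<in> nearest" using d_attained by (auto simp: nearest_def)
  then obtain p where p: "p \<in> nearest" and minimal: "\<And>p'. p' \<in> nearest \<Longrightarrow> dist1 p q \<le> dist1 p' q"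
    using ex_dist1_minimizer[of "\<lambda>z. z \<in> nearest" p0 q] by blast
  have between: "int_between (x w) (p w) (q w)" for w
    using nearest_between[OF p less.prems, of "{}"] minimal by simp
  show ?case
  proof (cases "\<exists>w. q w \<noteq> p w \<and> side w * (p w - q w) < 0")
    case True
    then obtain w where "q w \<noteq> p w" "side w * (p w - q w) < 0" by blast
    moreover have "\<bar>q w + sgn (p w - q w) - x w\<bar> < \<bar>q w - x w\<bar>" if "q w \<noteq> p w" for w
      using int_between_step[OF between that] by simp
    ultimately show ?thesis
      using signed_dist_bound_by_step[OF less.prems nearestD(1)[OF p]] IH by blast
  next
    case False
    then have "0 \<le> side w * (p w - q w)" for w
      by (cases "q w = p w") (auto simp: not_less)
    then show ?thesis
      using signed_dist_bound_aligned[OF less.prems p between] IH by blast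
  qed
qed

lemma separating_functional:
  assumes "x \<notin> B" "q \<in> B"
  shows "(\<Sum>w\<in>UNIV. side w * x w) < (\<Sum>w\<in>UNIV. side w * q w)"
proof -
  obtain p where "p \<in> B" "dist1 p x = d" using d_attained by blast
  then have "0 < d" using assms(1) dist1_nonneg[of p x] dist1_eq_0_iff[of p x] by auto
  then show ?thesis
    using signed_dist_lower_bound[OF assms(2)]
    by (simp add: signed_dist_def sum_subtractf algebra_simps)
qed

end

lemma rvec_notin_convex_hull:
  fixes c :: "'v::finite \<Rightarrow> int"
  assumes "\<And>q. q \<in> B \<Longrightarrow> (\<Sum>w\<in>UNIV. c w * y w) < (\<Sum>w\<in>UNIV. c w * q w)"
  shows "rvec y \<notin> convex hull (rvec ` B)"
proof -
  define a :: "real ^ 'v" where "a = (\<chi> w. real_of_int (c w))"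
  have inner_rvec: "inner a (rvec z) = real_of_int (\<Sum>w\<in>UNIV. c w * z w)" for z
    by (simp add: a_def rvec_def inner_vec_def)
  let ?t = "real_of_int (\<Sum>w\<in>UNIV. c w * y w) + 1"
  have "?t \<le> inner a (rvec q)" if "q \<in> B" for q
  proof -
    have "(\<Sum>w\<in>UNIV. c w * y w) + 1 \<le> (\<Sum>w\<in>UNIV. c w * q w)" using assms[OF that] by simp
    then show ?thesis unfolding inner_rvec by (metis of_int_1 of_int_add of_int_le_iff)
  qed
  then have "convex hull (rvec ` B) \<subseteq> {z. ?t \<le> inner a z}"
    by (intro hull_minimal convex_halfspace_ge) auto
  moreover have "\<not> ?t \<le> inner a (rvec y)" unfolding inner_rvec by simp
  ultimately show ?thesis by blast
qed

theorem mainTheorem3: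
  fixes B :: "('v::finite \<Rightarrow> int) set"
  assumes "B \<noteq> {}"
    and "delta_exc B"
  shows "hole_free B"
proof -
  have "y \<in> B" if y: "rvec y \<in> convex hull (rvec ` B)" for y
  proof (rule ccontr)
    assume "y \<notin> B"
    obtain p0 where "p0 \<in> B" using assms(1) by blast
    then obtain p where "p \<in> B" and minimal: "\<And>q. q \<in> B \<Longrightarrow> dist1 p y \<le> dist1 q y"
      using ex_dist1_minimizer[of "\<lambda>z. z \<in> B" p0 y] by blast
    then interpret nearest_points B y "dist1 p y"
      using assms(2) minimal by unfold_locales blast+
    show False
      using rvec_notin_convex_hull[OF separating_functional[OF \<open>y \<notin> B\<close>]] y by blast
  qed
  then show ?thesis by (auto simp: hole_free_def intro: hull_inc)
qed

end
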